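(* Let $1\le\nu<\infty$. The asymptotics of the iterates of bounded composition operators $C_\phi f=f\circ\phi$ on $\mathcal{F}^\nu$ are as follows. (1) If $\phi(z)=az$ with $|a|=1$ and $a\neq 1$, then the sequence $(C_\phi^n)_{n\ge1}$ consists of unitary operators, and it does not converge, even weakly. (2) If $\phi(z)=az+b$ with $|a|<1$ and $b\in\mathbb{C}$, then the sequence $(C_\phi^n)_{n\ge 1}$ converges in operator norm to the operator mapping each $f\in\mathcal{F}^\nu$ to the constant function with value $f(b/(1-a))$.
   Context: For $1\le\nu<\infty$, the Fock space $\mathcal{F}^\nu$ is the space of entire functions $f$ with $\|f\|_\nu:=\left(\frac{\nu}{2\pi}\int_{\mathbb{C}}|f(z)|^\nu e^{-\nu|z|^2/2}\,dm(z)\right)^{1/\nu}<\infty$ ($m$ = Lebesgue area measure). For an entire function $\phi$, $C_\phi f=f\circ\phi$. *)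

theory Defs
  imports "HOL-Complex_Analysis.Complex_Analysis"
begin

definition fock_integral :: "real \<Rightarrow> (complex \<Rightarrow> complex) \<Rightarrow> ennreal" where
  "fock_integral \<nu> f =
     (\<integral>\<^sup>+ z. ennreal (cmod (f z) powr \<nu> * exp (- \<nu> * (cmod z)\<^sup>2 / 2)) \<partial>lborel)"

definition fock_space :: "real \<Rightarrow> (complex \<Rightarrow> complex) set" where
  "fock_space \<nu> = {f. f holomorphic_on UNIV \<and> fock_integral \<nu> f < \<infinity>}"

(* \<parallel>f\<parallel>_\<nu>  (meaningful for f in the Fock space) *)
definition fock_norm :: "real \<Rightarrow> (complex \<Rightarrow> complex) \<Rightarrow> real" where
  "fock_norm \<nu> f = (\<nu> / (2 * pi) * enn2real (fock_integral \<nu> f)) powr (1 / \<nu>)"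

definition fock_bounded_operator :: "real \<Rightarrow> ((complex \<Rightarrow> complex) \<Rightarrow> (complex \<Rightarrow> complex)) \<Rightarrow> bool" where
  "fock_bounded_operator \<nu> T \<longleftrightarrow>
     (\<forall>f\<in>fock_space \<nu>. T f \<in> fock_space \<nu>) \<and>
     (\<forall>f\<in>fock_space \<nu>. \<forall>g\<in>fock_space \<nu>. T (\<lambda>z. f z + g z) = (\<lambda>z. T f z + T g z)) \<and>
     (\<forall>f\<in>fock_space \<nu>. \<forall>c. T (\<lambda>z. c * f z) = (\<lambda>z. c * T f z)) \<and>
     (\<exists>K. \<forall>f\<in>fock_space \<nu>. fock_norm \<nu> (T f) \<le> K * fock_norm \<nu> f)"

definition fock_bounded_functional :: "real \<Rightarrow> ((complex \<Rightarrow> complex) \<Rightarrow> complex) \<Rightarrow> bool" where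
  "fock_bounded_functional \<nu> \<Lambda> \<longleftrightarrow>
     (\<forall>f\<in>fock_space \<nu>. \<forall>g\<in>fock_space \<nu>. \<Lambda> (\<lambda>z. f z + g z) = \<Lambda> f + \<Lambda> g) \<and>
     (\<forall>f\<in>fock_space \<nu>. \<forall>c. \<Lambda> (\<lambda>z. c * f z) = c * \<Lambda> f) \<and>
     (\<exists>K. \<forall>f\<in>fock_space \<nu>. cmod (\<Lambda> f) \<le> K * fock_norm \<nu> f)"

definition fock_unitary :: "real \<Rightarrow> ((complex \<Rightarrow> complex) \<Rightarrow> (complex \<Rightarrow> complex)) \<Rightarrow> bool" where
  "fock_unitary \<nu> T \<longleftrightarrow>
     fock_bounded_operator \<nu> T \<and>
     (\<forall>f\<in>fock_space \<nu>. fock_norm \<nu> (T f) = fock_norm \<nu> f) \<and>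
     (\<forall>g\<in>fock_space \<nu>. \<exists>f\<in>fock_space \<nu>. T f = g)"

definition fock_op_dist :: "real \<Rightarrow> ((complex \<Rightarrow> complex) \<Rightarrow> (complex \<Rightarrow> complex))
     \<Rightarrow> ((complex \<Rightarrow> complex) \<Rightarrow> (complex \<Rightarrow> complex)) \<Rightarrow> ereal" where
  "fock_op_dist \<nu> T S =
     (SUP f\<in>{f\<in>fock_space \<nu>. fock_norm \<nu> f \<le> 1}.
        (let g = (\<lambda>z. T f z - S f z) in
         if g \<in> fock_space \<nu> then ereal (fock_norm \<nu> g) else \<infinity>))"

definition comp_op :: "(complex \<Rightarrow> complex) \<Rightarrow> (complex \<Rightarrow> complex) \<Rightarrow> (complex \<Rightarrow> complex)" where
  "comp_op \<phi> f = f \<circ> \<phi>"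

end

(*
  Lebesgue measure on the plane is rotation invariant (a rotation is a product of three shears),
  so z \<mapsto> f (a z) is a surjective isometry of F^\<nu> when |a| = 1. Point evaluations are bounded,
  |f w| \<le> C e^(|w|^2) \<parallel>f\<parallel>, by the sub-mean-value property on circles averaged against a
  Gaussian; testing the iterates on f z = z against evaluation at 1 gives the divergent
  sequence a^n.

  For |a| < 1 the iterates are z \<mapsto> c + a^n (z - c) with c = b / (1 - a). The Schwarz lemma
  applied to s \<mapsto> f (c + s (z - c)) - f c on |s| < 1/3, fed with the point evaluation bound,
  gives |f (c + a^n (z - c)) - f c| \<le> K |a|^n \<parallel>f\<parallel> e^(2|z|^2/9), and since 2/9 < 1/2
  this growth controls the Fock norm: the operator distance to f \<mapsto> f c is O(|a|^n).
*)

theory Submission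
  imports Defs "HOL-Probability.Probability"
begin

section \<open>Lebesgue measure on the complex plane\<close>

lemma measurable_Complex [measurable (raw)]:
  assumes "f \<in> borel_measurable M" "g \<in> borel_measurable M"
  shows "(\<lambda>x. Complex (f x) (g x)) \<in> borel_measurable M"
proof -
  have "(\<lambda>x. Complex (f x) (g x)) = (\<lambda>x. f x *\<^sub>R 1 + g x *\<^sub>R \<i>)"
    by (auto simp: complex_eq_iff)
  then show ?thesis
    using assms by simp
qed

lemma lborel_complex_eq_distr:
  "(lborel :: complex measure) = distr (lborel \<Otimes>\<^sub>M lborel) borel (\<lambda>(x, y). Complex x y)"
proof (rule lborel_eqI)
  fix l u :: complex
  assume le: "\<And>b. b \<in> Basis \<Longrightarrow> l \<bullet> b \<le> u \<bullet> b"
  have "Re l \<le> Re u" "Im l \<le> Im u"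
    using le[of 1] le[of \<i>] by (auto simp: Basis_complex_def)
  moreover have "(\<lambda>(x, y). Complex x y) -` box l u \<inter> space (lborel \<Otimes>\<^sub>M lborel)
      = {Re l<..<Re u} \<times> {Im l<..<Im u}"
    by (auto simp: box_def Basis_complex_def space_pair_measure)
  ultimately show "emeasure (distr (lborel \<Otimes>\<^sub>M lborel) borel (\<lambda>(x, y). Complex x y)) (box l u)
      = (\<Prod>b\<in>Basis. (u - l) \<bullet> b)"
    by (simp add: emeasure_distr lborel.emeasure_pair_measure_Times Basis_complex_def ennreal_mult)
qed simp

lemma nn_integral_lborel_complex:
  fixes F :: "complex \<Rightarrow> ennreal"
  assumes [measurable]: "F \<in> borel_measurable borel"
  shows "(\<integral>\<^sup>+z. F z \<partial>lborel) = (\<integral>\<^sup>+x. \<integral>\<^sup>+y. F (Complex x y) \<partial>lborel \<partial>lborel)"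
  by (subst lborel_complex_eq_distr)
     (simp add: nn_integral_distr lborel.nn_integral_fst[symmetric] case_prod_beta')

lemma nn_integral_lborel_translate:
  fixes c :: "'a::euclidean_space" and F :: "'a \<Rightarrow> ennreal"
  assumes [measurable]: "F \<in> borel_measurable borel"
  shows "(\<integral>\<^sup>+x. F (c + x) \<partial>lborel) = (\<integral>\<^sup>+x. F x \<partial>lborel)"
  by (subst (2) lborel_distr_plus[symmetric, of c]) (simp add: nn_integral_distr)

lemma nn_integral_horizontal_shear:
  fixes F :: "complex \<Rightarrow> ennreal"
  assumes [measurable]: "F \<in> borel_measurable borel"
  shows "(\<integral>\<^sup>+z. F (z + of_real (s * Im z)) \<partial>lborel) = (\<integral>\<^sup>+z. F z \<partial>lborel)"
proof -
  have translate: "(\<integral>\<^sup>+x. F (Complex (c + x) y) \<partial>lborel) = (\<integral>\<^sup>+x. F (Complex x y) \<partial>lborel)" for c y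
    by (rule nn_integral_lborel_translate[where F = "\<lambda>x. F (Complex x y)"]) measurable
  have "(\<integral>\<^sup>+z. F (z + of_real (s * Im z)) \<partial>lborel)
      = (\<integral>\<^sup>+x. \<integral>\<^sup>+y. F (Complex (x + s * y) y) \<partial>lborel \<partial>lborel)"
    by (subst nn_integral_lborel_complex)
       (auto simp: complex_eq_iff intro!: nn_integral_cong arg_cong[where f = F])
  also have "\<dots> = (\<integral>\<^sup>+y. \<integral>\<^sup>+x. F (Complex (s * y + x) y) \<partial>lborel \<partial>lborel)"
    by (subst lborel_pair.Fubini') (simp_all add: add.commute)
  also have "\<dots> = (\<integral>\<^sup>+y. \<integral>\<^sup>+x. F (Complex x y) \<partial>lborel \<partial>lborel)"
    by (simp only: translate)
  also have "\<dots> = (\<integral>\<^sup>+z. F z \<partial>lborel)"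
    by (subst lborel_pair.Fubini') (simp_all add: nn_integral_lborel_complex)
  finally show ?thesis .
qed

lemma nn_integral_vertical_shear:
  fixes F :: "complex \<Rightarrow> ennreal"
  assumes [measurable]: "F \<in> borel_measurable borel"
  shows "(\<integral>\<^sup>+z. F (z + \<i> * of_real (s * Re z)) \<partial>lborel) = (\<integral>\<^sup>+z. F z \<partial>lborel)"
proof -
  have translate: "(\<integral>\<^sup>+y. F (Complex x (c + y)) \<partial>lborel) = (\<integral>\<^sup>+y. F (Complex x y) \<partial>lborel)" for c x
    by (rule nn_integral_lborel_translate[where F = "\<lambda>y. F (Complex x y)"]) measurable
  have "(\<integral>\<^sup>+z. F (z + \<i> * of_real (s * Re z)) \<partial>lborel)
      = (\<integral>\<^sup>+x. \<integral>\<^sup>+y. F (Complex x (s * x + y)) \<partial>lborel \<partial>lborel)"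
    by (subst nn_integral_lborel_complex)
       (auto simp: complex_eq_iff intro!: nn_integral_cong arg_cong[where f = F])
  also have "\<dots> = (\<integral>\<^sup>+z. F z \<partial>lborel)"
    by (simp only: translate nn_integral_lborel_complex[OF assms])
  finally show ?thesis .
qed

text \<open>For \<open>a = exp (\<i> * \<theta>)\<close> with \<open>-pi < \<theta> < pi\<close> the shear parameter is \<open>t = tan (\<theta> / 2)\<close>.\<close>

lemma rotation_eq_three_shears:
  fixes a z :: complex
  assumes "cmod a = 1" "Re a > -1"
  defines "t \<equiv> Im a / (1 + Re a)"
  defines "A \<equiv> \<lambda>v. v + of_real (- t * Im v)" and "B \<equiv> \<lambda>u. u + \<i> * of_real (Im a * Re u)"
  shows "a * z = A (B (A z))"
proof -
  have unit: "(Re a)\<^sup>2 + (Im a)\<^sup>2 = 1"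
    using assms(1) by (simp add: cmod_def)
  have t: "t * (1 + Re a) = Im a"
    unfolding t_def using assms(2) by simp
  have "Im a * t * (1 + Re a) = (Im a)\<^sup>2"
    by (metis t mult.assoc power2_eq_square)
  also have "\<dots> = (1 - Re a) * (1 + Re a)"
    using unit by (simp add: algebra_simps power2_eq_square)
  finally have "Im a * t = 1 - Re a"
    using assms(2) by simp
  then show ?thesis
    using t by (simp add: A_def B_def complex_eq_iff) algebra
qed

lemma nn_integral_rotation_three_shears:
  fixes F :: "complex \<Rightarrow> ennreal"
  assumes [measurable]: "F \<in> borel_measurable borel" and a: "cmod a = 1" "Re a > -1"
  shows "(\<integral>\<^sup>+z. F (a * z) \<partial>lborel) = (\<integral>\<^sup>+z. F z \<partial>lborel)"
proof -
  define t where "t = Im a / (1 + Re a)"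
  define A where "A = (\<lambda>v::complex. v + of_real (- t * Im v))"
  define B where "B = (\<lambda>u::complex. u + \<i> * of_real (Im a * Re u))"
  have [measurable]: "A \<in> borel_measurable borel" "B \<in> borel_measurable borel"
    unfolding A_def B_def by measurable
  have "(\<integral>\<^sup>+z. F (a * z) \<partial>lborel) = (\<integral>\<^sup>+z. F (A (B (A z))) \<partial>lborel)"
    using rotation_eq_three_shears[OF a] by (simp add: A_def B_def t_def)
  also have "\<dots> = (\<integral>\<^sup>+u. F (A (B u)) \<partial>lborel)"
    using nn_integral_horizontal_shear[of "\<lambda>u. F (A (B u))" "- t"] by (simp add: A_def)
  also have "\<dots> = (\<integral>\<^sup>+v. F (A v) \<partial>lborel)"
    using nn_integral_vertical_shear[of "\<lambda>v. F (A v)" "Im a"] by (simp add: B_def)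
  also have "\<dots> = (\<integral>\<^sup>+z. F z \<partial>lborel)"
    using nn_integral_horizontal_shear[of F "- t"] by (simp add: A_def)
  finally show ?thesis .
qed

lemma nn_integral_rotation:
  fixes F :: "complex \<Rightarrow> ennreal"
  assumes [measurable]: "F \<in> borel_measurable borel" and "cmod a = 1"
  shows "(\<integral>\<^sup>+z. F (a * z) \<partial>lborel) = (\<integral>\<^sup>+z. F z \<partial>lborel)"
proof -
  \<comment> \<open>\<open>Re (csqrt a) \<ge> 0\<close>, so the square root lies in the range of the three-shear lemma\<close>
  define b where "b = csqrt a"
  have b: "cmod b = 1" "Re b > -1"
    using \<open>cmod a = 1\<close> Re_csqrt[of a] unfolding b_def by (simp add: norm_csqrt, linarith)
  have "(\<integral>\<^sup>+z. F (a * z) \<partial>lborel) = (\<integral>\<^sup>+z. F (b * (b * z)) \<partial>lborel)"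
    by (simp add: b_def mult.assoc[symmetric] power2_eq_square[symmetric])
  also have "\<dots> = (\<integral>\<^sup>+z. F (b * z) \<partial>lborel)"
    by (rule nn_integral_rotation_three_shears[OF _ b]) measurable
  also have "\<dots> = (\<integral>\<^sup>+z. F z \<partial>lborel)"
    by (rule nn_integral_rotation_three_shears[OF _ b]) measurable
  finally show ?thesis .
qed

section \<open>Gaussian integrals and point evaluations\<close>

lemma nn_integral_gaussian_real_finite:
  fixes c :: real
  assumes "c > 0"
  shows "(\<integral>\<^sup>+x. ennreal (exp (- c * x\<^sup>2)) \<partial>lborel) < \<infinity>"
proof -
  define \<sigma> where "\<sigma> = sqrt (1 / (2 * c))"
  have \<sigma>: "\<sigma> > 0" "\<sigma>\<^sup>2 = 1 / (2 * c)"
    using assms by (simp_all add: \<sigma>_def)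
  then have "exp (- c * x\<^sup>2) = sqrt (2 * pi * \<sigma>\<^sup>2) * normal_density 0 \<sigma> x" for x
    using assms by (simp add: normal_density_def field_simps)
  moreover have "integrable lborel (\<lambda>x. sqrt (2 * pi * \<sigma>\<^sup>2) * normal_density 0 \<sigma> x)"
    using \<sigma> by (intro integrable_mult_right integrable_normal_density) auto
  ultimately have "integrable lborel (\<lambda>x. exp (- c * x\<^sup>2))"
    by presburger
  then show ?thesis
    by (simp add: integrable_iff_bounded)
qed

lemma nn_integral_gaussian_finite:
  fixes c :: real
  assumes "c > 0"
  shows "(\<integral>\<^sup>+z. ennreal (exp (- c * (cmod (z::complex))\<^sup>2)) \<partial>lborel) < \<infinity>"
proof -
  let ?I = "\<integral>\<^sup>+x. ennreal (exp (- c * x\<^sup>2)) \<partial>lborel"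
  have "ennreal (exp (- c * (cmod (Complex x y))\<^sup>2))
      = ennreal (exp (- c * x\<^sup>2)) * ennreal (exp (- c * y\<^sup>2))" for x y
    by (simp add: cmod_def ennreal_mult[symmetric] exp_add[symmetric] algebra_simps)
  then have "(\<integral>\<^sup>+z. ennreal (exp (- c * (cmod (z::complex))\<^sup>2)) \<partial>lborel) = ?I * ?I"
    by (simp add: nn_integral_lborel_complex nn_integral_cmult nn_integral_multc)
  then show ?thesis
    using nn_integral_gaussian_real_finite[OF assms] by (simp add: ennreal_mult_less_top)
qed

lemma nn_integral_gaussian_pos:
  fixes c :: real
  shows "(\<integral>\<^sup>+z. ennreal (exp (- c * (cmod (z::complex))\<^sup>2)) \<partial>lborel) > 0"
proof -
  have "\<not> (AE z in lborel. ennreal (exp (- c * (cmod (z::complex))\<^sup>2)) = 0)"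
    using ae_filter_eq_bot_iff[of "lborel :: complex measure"] by (simp add: eventually_False)
  then show ?thesis
    by (simp add: zero_less_iff_neq_zero nn_integral_0_iff_AE)
qed

lemma norm_exp_2pi_i [simp]: "cmod (exp (2 * of_real pi * \<i> * of_real x)) = 1"
  by (metis norm_exp_i_times mult.commute mult.left_commute of_real_mult of_real_numeral)

lemma circle_mean_value:
  assumes "g holomorphic_on UNIV"
  shows "((\<lambda>x. g (exp (2 * of_real pi * \<i> * of_real x))) has_integral g 0) {0..1}"
proof -
  have "((\<lambda>u. g u / (u - 0)) has_contour_integral (2 * of_real pi * \<i> * g 0)) (circlepath 0 1)"
    using assms by (intro Cauchy_integral_circlepath_simple) (auto intro: holomorphic_on_subset)
  then have "((\<lambda>x. g (circlepath 0 1 x) / circlepath 0 1 x * vector_derivative (circlepath 0 1) (at x))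
      has_integral (2 * of_real pi * \<i> * g 0)) {0..1}"
    by (simp add: has_contour_integral)
  then have "((\<lambda>x. 2 * of_real pi * \<i> * g (exp (2 * of_real pi * \<i> * of_real x)))
      has_integral (2 * of_real pi * \<i> * g 0)) {0..1}"
    by (simp only: vector_derivative_circlepath) (simp add: circlepath field_simps)
  from has_integral_mult_right[OF this, of "inverse (2 * of_real pi * \<i>)"] show ?thesis
    by (simp add: field_simps)
qed

lemma norm_le_circle_mean:
  assumes "g holomorphic_on UNIV"
  shows "ennreal (cmod (g w))
    \<le> (\<integral>\<^sup>+x. indicator {0..1} x * ennreal (cmod (g (w + exp (2 * of_real pi * \<i> * of_real x) * \<zeta>)))
      \<partial>lborel)"
proof -
  define h where "h = (\<lambda>s. g (w + s * \<zeta>))"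
  have hol: "h holomorphic_on UNIV"
    unfolding h_def using assms
    by (auto intro!: holomorphic_on_compose_gen[unfolded o_def, of _ _ g UNIV] holomorphic_intros)
  let ?h = "\<lambda>x::real. h (exp (2 * of_real pi * \<i> * of_real x))"
  have "continuous_on {0..1} ?h"
    by (intro continuous_on_compose2[OF holomorphic_on_imp_continuous_on[OF hol]] continuous_intros)
       auto
  then have int: "?h integrable_on {0..1}" "(\<lambda>x. cmod (?h x)) integrable_on {0..1}"
    by (auto intro: integrable_continuous_interval continuous_on_norm)
  have "cmod (g w) = cmod (integral {0..1} ?h)"
    using circle_mean_value[OF hol] by (simp add: integral_unique h_def)
  also have "\<dots> \<le> integral {0..1} (\<lambda>x. cmod (?h x))"
    using int by (intro integral_norm_bound_integral) auto
  also have "ennreal \<dots> = (\<integral>\<^sup>+x. indicator {0..1} x * ennreal (cmod (?h x)) \<partial>lborel)"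
    using nn_integral_has_integral_lebesgue'[OF _ int(2)[unfolded has_integral_integral]]
    by (simp add: mult.commute)
  finally show ?thesis
    by (simp add: ennreal_leI h_def)
qed

lemma borel_measurable_entire:
  "f holomorphic_on UNIV \<Longrightarrow> f \<in> borel_measurable borel"
  by (intro borel_measurable_continuous_onI holomorphic_on_imp_continuous_on)

lemma norm_le_gaussian_mean:
  assumes "g holomorphic_on UNIV"
  shows "ennreal (cmod (g w)) * (\<integral>\<^sup>+\<zeta>. ennreal (exp (- c * (cmod \<zeta>)\<^sup>2)) \<partial>lborel)
    \<le> (\<integral>\<^sup>+\<zeta>. ennreal (exp (- c * (cmod \<zeta>)\<^sup>2)) * ennreal (cmod (g (w + \<zeta>))) \<partial>lborel)"
proof -
  let ?e = "\<lambda>x::real. exp (2 * of_real pi * \<i> * of_real x)"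
  let ?W = "\<lambda>\<zeta>::complex. ennreal (exp (- c * (cmod \<zeta>)\<^sup>2))"
  let ?J = "\<integral>\<^sup>+\<zeta>. ?W \<zeta> * ennreal (cmod (g (w + \<zeta>))) \<partial>lborel"
  have [measurable]: "g \<in> borel_measurable borel"
    using assms by (rule borel_measurable_entire)
  have rotate: "(\<integral>\<^sup>+\<zeta>. ?W \<zeta> * ennreal (cmod (g (w + ?e x * \<zeta>))) \<partial>lborel) = ?J" for x
    using nn_integral_rotation[of "\<lambda>\<zeta>. ?W \<zeta> * ennreal (cmod (g (w + \<zeta>)))" "?e x"]
    by (simp add: norm_mult)
  have "ennreal (cmod (g w)) * integral\<^sup>N lborel ?W = (\<integral>\<^sup>+\<zeta>. ?W \<zeta> * ennreal (cmod (g w)) \<partial>lborel)"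
    by (subst nn_integral_multc) (auto simp: mult.commute)
  also have "\<dots> \<le> (\<integral>\<^sup>+\<zeta>. \<integral>\<^sup>+x. indicator {0..1} x * (?W \<zeta> * ennreal (cmod (g (w + ?e x * \<zeta>))))
      \<partial>lborel \<partial>lborel)"
  proof (rule nn_integral_mono)
    fix \<zeta>
    have "?W \<zeta> * ennreal (cmod (g w))
        \<le> ?W \<zeta> * (\<integral>\<^sup>+x. indicator {0..1} x * ennreal (cmod (g (w + ?e x * \<zeta>))) \<partial>lborel)"
      using assms by (intro mult_left_mono norm_le_circle_mean) simp_all
    also have "\<dots> = (\<integral>\<^sup>+x. indicator {0..1} x * (?W \<zeta> * ennreal (cmod (g (w + ?e x * \<zeta>)))) \<partial>lborel)"
      by (subst nn_integral_cmult[symmetric]) (measurable, simp add: mult.left_commute)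
    finally show "?W \<zeta> * ennreal (cmod (g w))
        \<le> (\<integral>\<^sup>+x. indicator {0..1} x * (?W \<zeta> * ennreal (cmod (g (w + ?e x * \<zeta>)))) \<partial>lborel)" .
  qed
  also have "\<dots> = (\<integral>\<^sup>+x. \<integral>\<^sup>+\<zeta>. indicator {0..1} x * (?W \<zeta> * ennreal (cmod (g (w + ?e x * \<zeta>))))
      \<partial>lborel \<partial>lborel)"
    by (rule lborel_pair.Fubini') measurable
  also have "\<dots> = (\<integral>\<^sup>+x. indicator {0..1::real} x * ?J \<partial>lborel)"
    using rotate by (simp add: nn_integral_cmult)
  also have "\<dots> = ?J"
    by (simp add: nn_integral_multc mult.commute)
  finally show ?thesis .
qed

lemma nn_integral_gaussian_translate_le:
  fixes f :: "complex \<Rightarrow> complex"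
  assumes "\<nu> \<ge> 0" and [measurable]: "f \<in> borel_measurable borel"
  shows "(\<integral>\<^sup>+\<zeta>. ennreal (exp (- \<nu> * (cmod \<zeta>)\<^sup>2)) * ennreal (cmod (f (w + \<zeta>)) powr \<nu>) \<partial>lborel)
    \<le> ennreal (exp (\<nu> * (cmod w)\<^sup>2)) * fock_integral \<nu> f"
proof -
  have weight: "exp (- \<nu> * (cmod (z - w))\<^sup>2) \<le> exp (\<nu> * (cmod w)\<^sup>2) * exp (- \<nu> * (cmod z)\<^sup>2 / 2)" for z
  proof -
    have "cmod z \<le> cmod (z - w) + cmod w"
      using norm_triangle_ineq[of "z - w" w] by simp
    then have "(cmod z)\<^sup>2 \<le> (cmod (z - w) + cmod w)\<^sup>2"
      by (simp add: power_mono)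
    also have "\<dots> \<le> 2 * (cmod (z - w))\<^sup>2 + 2 * (cmod w)\<^sup>2"
      using sum_squares_ge_zero[of "cmod (z - w) - cmod w" 0] by (simp add: power2_eq_square algebra_simps)
    finally have "\<nu> * (cmod z)\<^sup>2 \<le> \<nu> * (2 * (cmod (z - w))\<^sup>2 + 2 * (cmod w)\<^sup>2)"
      using assms(1) by (rule mult_left_mono)
    then show ?thesis
      by (simp add: exp_add[symmetric] algebra_simps)
  qed
  have "(\<integral>\<^sup>+\<zeta>. ennreal (exp (- \<nu> * (cmod \<zeta>)\<^sup>2)) * ennreal (cmod (f (w + \<zeta>)) powr \<nu>) \<partial>lborel)
      = (\<integral>\<^sup>+z. ennreal (exp (- \<nu> * (cmod (z - w))\<^sup>2)) * ennreal (cmod (f z) powr \<nu>) \<partial>lborel)"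
    using nn_integral_lborel_translate
      [of "\<lambda>z. ennreal (exp (- \<nu> * (cmod (z - w))\<^sup>2)) * ennreal (cmod (f z) powr \<nu>)" w]
    by simp
  also have "\<dots> \<le> (\<integral>\<^sup>+z. ennreal (exp (\<nu> * (cmod w)\<^sup>2))
      * ennreal (cmod (f z) powr \<nu> * exp (- \<nu> * (cmod z)\<^sup>2 / 2)) \<partial>lborel)"
    using weight by (intro nn_integral_mono) (simp add: ennreal_mult'[symmetric] mult_left_mono mult_ac)
  also have "\<dots> = ennreal (exp (\<nu> * (cmod w)\<^sup>2)) * fock_integral \<nu> f"
    unfolding fock_integral_def by (simp add: nn_integral_cmult)
  finally show ?thesis .
qed

lemma le_one_plus_powr:
  fixes y \<nu> :: real
  assumes "0 \<le> y" "1 \<le> \<nu>"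
  shows "y \<le> 1 + y powr \<nu>"
proof (cases "y \<le> 1")
  case True
  then show ?thesis
    by (simp add: add_increasing2)
next
  case False
  then have "y powr 1 \<le> y powr \<nu>"
    using assms(2) by (intro powr_mono) auto
  then show ?thesis
    using False by simp
qed

lemma le_by_optimal_scaling:
  fixes y I B \<nu> :: real
  assumes scaled: "\<And>r. r > 0 \<Longrightarrow> y / r * I \<le> I + B / r powr \<nu>"
    and "0 < I" "0 \<le> B" "0 < \<nu>"
  shows "y \<le> (1 + 1 / I) * B powr (1 / \<nu>)"
proof (cases "B = 0")
  case True
  show ?thesis
  proof (rule ccontr)
    assume "\<not> ?thesis"
    then have "y > 0"
      using True by simp
    then show False
      using scaled[of "y / 2"] True \<open>0 < I\<close> by simp
  qed
next
  case False
  define r where "r = B powr (1 / \<nu>)"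
  have "r > 0" "r powr \<nu> = B"
    using False assms(3,4) by (simp_all add: r_def powr_powr)
  then have "y / r * I \<le> I + 1"
    using scaled False by fastforce
  then show ?thesis
    using \<open>r > 0\<close> \<open>0 < I\<close> by (simp add: r_def[symmetric] field_simps)
qed

text \<open>The bound \<open>y \<le> 1 + y powr \<nu>\<close> is not homogeneous; applying it to \<open>|f| / r\<close> leaves the
  scale \<open>r\<close> free, and optimising over \<open>r\<close> afterwards recovers a bound linear in the norm.\<close>

lemma fock_scaled_point_bound:
  assumes "1 \<le> \<nu>" and hol: "f holomorphic_on UNIV" and "r > 0"
  defines "G \<equiv> \<integral>\<^sup>+\<zeta>. ennreal (exp (- \<nu> * (cmod \<zeta>)\<^sup>2)) \<partial>lborel"
  shows "ennreal (cmod (f w) / r) * G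
    \<le> G + ennreal (exp (\<nu> * (cmod w)\<^sup>2) / r powr \<nu>) * fock_integral \<nu> f"
proof -
  let ?W = "\<lambda>\<zeta>::complex. ennreal (exp (- \<nu> * (cmod \<zeta>)\<^sup>2))"
  have [measurable]: "f \<in> borel_measurable borel"
    using hol by (rule borel_measurable_entire)
  have "(\<lambda>z. f z / of_real r) holomorphic_on UNIV"
    using hol by (intro holomorphic_intros) (use \<open>r > 0\<close> in auto)
  from norm_le_gaussian_mean[OF this, of w \<nu>]
  have "ennreal (cmod (f w) / r) * G \<le> (\<integral>\<^sup>+\<zeta>. ?W \<zeta> * ennreal (cmod (f (w + \<zeta>)) / r) \<partial>lborel)"
    using \<open>r > 0\<close> by (simp add: G_def norm_divide)
  also have "\<dots> \<le> (\<integral>\<^sup>+\<zeta>. ?W \<zeta> + ennreal (1 / r powr \<nu>)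
      * (?W \<zeta> * ennreal (cmod (f (w + \<zeta>)) powr \<nu>)) \<partial>lborel)"
  proof (rule nn_integral_mono)
    fix \<zeta>
    have "cmod (f (w + \<zeta>)) / r \<le> 1 + (cmod (f (w + \<zeta>)) / r) powr \<nu>"
      using \<open>1 \<le> \<nu>\<close> \<open>r > 0\<close> by (intro le_one_plus_powr) auto
    then have "?W \<zeta> * ennreal (cmod (f (w + \<zeta>)) / r)
        \<le> ?W \<zeta> * ennreal (1 + (cmod (f (w + \<zeta>)) / r) powr \<nu>)"
      by (intro mult_left_mono ennreal_leI) auto
    then show "?W \<zeta> * ennreal (cmod (f (w + \<zeta>)) / r)
        \<le> ?W \<zeta> + ennreal (1 / r powr \<nu>) * (?W \<zeta> * ennreal (cmod (f (w + \<zeta>)) powr \<nu>))"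
      using \<open>r > 0\<close> by (simp add: powr_divide ennreal_plus ennreal_mult'[symmetric] distrib_left mult_ac)
  qed
  also have "\<dots> = G + ennreal (1 / r powr \<nu>)
      * (\<integral>\<^sup>+\<zeta>. ?W \<zeta> * ennreal (cmod (f (w + \<zeta>)) powr \<nu>) \<partial>lborel)"
    by (simp add: G_def nn_integral_add nn_integral_cmult)
  also have "\<dots> \<le> G + ennreal (1 / r powr \<nu>) * (ennreal (exp (\<nu> * (cmod w)\<^sup>2)) * fock_integral \<nu> f)"
    using \<open>1 \<le> \<nu>\<close> by (intro add_left_mono mult_left_mono nn_integral_gaussian_translate_le) auto
  also have "\<dots> = G + ennreal (exp (\<nu> * (cmod w)\<^sup>2) / r powr \<nu>) * fock_integral \<nu> f"
    by (simp add: ennreal_mult'[symmetric] mult.assoc[symmetric])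
  finally show ?thesis .
qed

lemma fock_point_evaluation_bound:
  assumes "1 \<le> \<nu>"
  obtains C where "C > 0"
    "\<And>f w. f \<in> fock_space \<nu> \<Longrightarrow> cmod (f w) \<le> C * exp ((cmod w)\<^sup>2) * fock_norm \<nu> f"
proof -
  let ?G = "\<integral>\<^sup>+\<zeta>. ennreal (exp (- \<nu> * (cmod (\<zeta>::complex))\<^sup>2)) \<partial>lborel"
  define I where "I = enn2real ?G"
  have "\<nu> > 0"
    using assms by simp
  then have G: "?G = ennreal I" "I > 0"
    using nn_integral_gaussian_finite[of \<nu>] nn_integral_gaussian_pos[of \<nu>]
    by (auto simp: I_def less_top enn2real_positive_iff)
  show ?thesis
  proof
    show "(1 + 1 / I) * (2 * pi / \<nu>) powr (1 / \<nu>) > 0"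
      using G(2) \<open>\<nu> > 0\<close> by (intro mult_pos_pos add_pos_pos) auto
  next
    fix f w
    assume f: "f \<in> fock_space \<nu>"
    define F where "F = enn2real (fock_integral \<nu> f)"
    have F: "fock_integral \<nu> f = ennreal F" "F \<ge> 0"
      using f by (simp_all add: F_def fock_space_def less_top)
    have "cmod (f w) \<le> (1 + 1 / I) * (exp (\<nu> * (cmod w)\<^sup>2) * F) powr (1 / \<nu>)"
    proof (rule le_by_optimal_scaling)
      fix r :: real
      assume "r > 0"
      have "ennreal (cmod (f w) / r) * ennreal I
          \<le> ennreal I + ennreal (exp (\<nu> * (cmod w)\<^sup>2) / r powr \<nu>) * ennreal F"
        using fock_scaled_point_bound[OF assms _ \<open>r > 0\<close>, of f w] f G F
        by (simp add: fock_space_def)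
      then show "cmod (f w) / r * I \<le> I + exp (\<nu> * (cmod w)\<^sup>2) * F / r powr \<nu>"
        using \<open>r > 0\<close> G F
        by (simp add: ennreal_mult'[symmetric] ennreal_plus[symmetric] del: ennreal_plus)
    qed (use G F \<open>\<nu> > 0\<close> in auto)
    also have "(exp (\<nu> * (cmod w)\<^sup>2) * F) powr (1 / \<nu>) = exp ((cmod w)\<^sup>2) * F powr (1 / \<nu>)"
      using \<open>\<nu> > 0\<close> F by (simp add: powr_mult) (simp add: powr_def)
    also have "F powr (1 / \<nu>) = (2 * pi / \<nu>) powr (1 / \<nu>) * fock_norm \<nu> f"
      using \<open>\<nu> > 0\<close> F by (simp add: fock_norm_def F_def powr_mult[symmetric])
    finally show "cmod (f w) \<le> (1 + 1 / I) * (2 * pi / \<nu>) powr (1 / \<nu>) * exp ((cmod w)\<^sup>2) * fock_norm \<nu> f"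
      by (simp add: mult_ac)
  qed
qed

section \<open>Estimates for the Fock norm\<close>

lemma fock_norm_nonneg [simp]: "0 \<le> fock_norm \<nu> f"
  by (simp add: fock_norm_def)

lemma fock_integral_mono:
  assumes "0 \<le> \<nu>" "\<And>z. cmod (g z) \<le> cmod (h z)"
  shows "fock_integral \<nu> g \<le> fock_integral \<nu> h"
  unfolding fock_integral_def
  using assms by (intro nn_integral_mono ennreal_leI mult_right_mono powr_mono2) auto

lemma fock_norm_mono:
  assumes "0 < \<nu>" "\<And>z. cmod (g z) \<le> cmod (h z)" "fock_integral \<nu> h < \<infinity>"
  shows "fock_norm \<nu> g \<le> fock_norm \<nu> h"
proof -
  have "enn2real (fock_integral \<nu> g) \<le> enn2real (fock_integral \<nu> h)"
    using assms by (intro enn2real_mono fock_integral_mono) auto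
  then show ?thesis
    unfolding fock_norm_def using assms(1) by (intro powr_mono2 mult_left_mono) auto
qed

lemma fock_integral_cmult:
  assumes [measurable]: "h \<in> borel_measurable borel"
  shows "fock_integral \<nu> (\<lambda>z. c * h z) = ennreal (cmod c powr \<nu>) * fock_integral \<nu> h"
  unfolding fock_integral_def
  by (subst nn_integral_cmult[symmetric])
     (measurable, simp add: norm_mult powr_mult ennreal_mult'[symmetric] mult.assoc)

lemma fock_norm_cmult:
  assumes "0 < \<nu>" "h \<in> borel_measurable borel"
  shows "fock_norm \<nu> (\<lambda>z. c * h z) = cmod c * fock_norm \<nu> h"
proof -
  have "fock_norm \<nu> (\<lambda>z. c * h z)
      = (cmod c powr \<nu> * (\<nu> / (2 * pi) * enn2real (fock_integral \<nu> h))) powr (1 / \<nu>)"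
    using fock_integral_cmult[OF assms(2)] by (simp add: fock_norm_def enn2real_mult mult_ac)
  also have "\<dots> = (cmod c powr \<nu>) powr (1 / \<nu>) * fock_norm \<nu> h"
    unfolding fock_norm_def by (intro powr_mult)
  also have "(cmod c powr \<nu>) powr (1 / \<nu>) = cmod c"
    using assms(1) by (simp add: powr_powr)
  finally show ?thesis .
qed

lemma fock_integral_exp_growth_finite:
  assumes "0 < \<nu>" "\<alpha> < 1 / 2"
  shows "fock_integral \<nu> (\<lambda>z. of_real (exp (\<alpha> * (cmod z)\<^sup>2))) < \<infinity>"
proof -
  have "exp (\<alpha> * (cmod z)\<^sup>2) powr \<nu> * exp (- \<nu> * (cmod z)\<^sup>2 / 2)
      = exp (- (\<nu> * (1 / 2 - \<alpha>)) * (cmod z)\<^sup>2)" for z :: complex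
    by (simp add: powr_def exp_add[symmetric] algebra_simps)
  moreover have "\<nu> * (1 / 2 - \<alpha>) > 0"
    using assms by simp
  ultimately show ?thesis
    using nn_integral_gaussian_finite by (simp add: fock_integral_def)
qed

lemma fock_space_gaussian_growth:
  assumes "0 < \<nu>" "\<alpha> < 1 / 2" "g holomorphic_on UNIV" "0 \<le> M"
    and growth: "\<And>z. cmod (g z) \<le> M * exp (\<alpha> * (cmod z)\<^sup>2)"
  shows "g \<in> fock_space \<nu>"
    and "fock_norm \<nu> g \<le> M * fock_norm \<nu> (\<lambda>z. of_real (exp (\<alpha> * (cmod z)\<^sup>2)))"
proof -
  let ?G = "\<lambda>z. complex_of_real (exp (\<alpha> * (cmod z)\<^sup>2))"
  have [measurable]: "?G \<in> borel_measurable borel"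
    by measurable
  have bound: "cmod (g z) \<le> cmod (of_real M * ?G z)" for z
    using growth[of z] \<open>0 \<le> M\<close> by (simp add: norm_mult)
  have finite: "fock_integral \<nu> (\<lambda>z. of_real M * ?G z) < \<infinity>"
    using fock_integral_exp_growth_finite[OF assms(1,2)]
    by (simp add: fock_integral_cmult ennreal_mult_less_top)
  have "fock_integral \<nu> g \<le> fock_integral \<nu> (\<lambda>z. of_real M * ?G z)"
    using \<open>0 < \<nu>\<close> bound by (intro fock_integral_mono) auto
  with finite show "g \<in> fock_space \<nu>"
    using assms(3) by (simp add: fock_space_def)
  have "fock_norm \<nu> g \<le> fock_norm \<nu> (\<lambda>z. of_real M * ?G z)"
    using \<open>0 < \<nu>\<close> bound finite by (intro fock_norm_mono)
  also have "\<dots> = M * fock_norm \<nu> ?G"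
    using \<open>0 < \<nu>\<close> \<open>0 \<le> M\<close> by (simp add: fock_norm_cmult)
  finally show "fock_norm \<nu> g \<le> M * fock_norm \<nu> ?G" .
qed

section \<open>Rotations\<close>

lemma comp_op_funpow: "(comp_op \<phi> ^^ n) f = f \<circ> (\<phi> ^^ n)"
  by (induction n) (simp_all add: comp_op_def o_def funpow_swap1)

lemma funpow_scale: "((\<lambda>z. a * z) ^^ n) z = a ^ n * (z :: 'a :: comm_monoid_mult)"
  by (induction n) (simp_all add: mult_ac)

lemma funpow_affine:
  fixes a b z :: "'a :: field"
  assumes "a \<noteq> 1"
  shows "((\<lambda>z. a * z + b) ^^ n) z = b / (1 - a) + a ^ n * (z - b / (1 - a))"
proof (induction n)
  case (Suc n)
  define c where "c = b / (1 - a)"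
  have "a * c + b = c"
    using assms by (simp add: c_def field_simps)
  then have "a * (c + a ^ n * (z - c)) + b = c + a ^ Suc n * (z - c)"
    by (simp add: algebra_simps)
  then show ?case
    using Suc by (simp add: c_def)
qed simp

lemma fock_integral_rotation:
  assumes "cmod b = 1" "f \<in> borel_measurable borel"
  shows "fock_integral \<nu> (\<lambda>z. f (b * z)) = fock_integral \<nu> f"
  using nn_integral_rotation[of "\<lambda>z. ennreal (cmod (f z) powr \<nu> * exp (- \<nu> * (cmod z)\<^sup>2 / 2))" b] assms
  by (simp add: fock_integral_def norm_mult)

lemma fock_space_rotation:
  assumes "f \<in> fock_space \<nu>" "cmod b = 1"
  shows "(\<lambda>z. f (b * z)) \<in> fock_space \<nu>" "fock_norm \<nu> (\<lambda>z. f (b * z)) = fock_norm \<nu> f"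
proof -
  have hol: "f holomorphic_on UNIV"
    using assms(1) by (simp add: fock_space_def)
  then have "fock_integral \<nu> (\<lambda>z. f (b * z)) = fock_integral \<nu> f"
    using assms(2) by (intro fock_integral_rotation borel_measurable_entire)
  moreover have "(\<lambda>z. f (b * z)) holomorphic_on UNIV"
    using hol by (auto intro!: holomorphic_on_compose_gen[unfolded o_def, of _ _ f UNIV] holomorphic_intros)
  ultimately show "(\<lambda>z. f (b * z)) \<in> fock_space \<nu>" "fock_norm \<nu> (\<lambda>z. f (b * z)) = fock_norm \<nu> f"
    using assms(1) by (simp_all add: fock_space_def fock_norm_def)
qed

lemma fock_unitary_rotation:
  assumes "cmod b = 1"
  shows "fock_unitary \<nu> (\<lambda>f z. f (b * z))"
  unfolding fock_unitary_def fock_bounded_operator_def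
proof (intro conjI ballI allI exI[of _ 1])
  fix g
  assume "g \<in> fock_space \<nu>"
  moreover have "cmod (inverse b) = 1" "b \<noteq> 0"
    using assms by (auto simp: norm_inverse)
  ultimately show "\<exists>f\<in>fock_space \<nu>. (\<lambda>z. f (b * z)) = g"
    using assms fock_space_rotation(1)[of g \<nu> "inverse b"]
    by (intro bexI[of _ "\<lambda>z. g (inverse b * z)"]) (auto simp: mult.assoc[symmetric])
qed (use assms fock_space_rotation in auto)

lemma fock_unitary_rotation_iterates:
  assumes "cmod a = 1"
  shows "fock_unitary \<nu> (comp_op (\<lambda>z. a * z) ^^ n)"
proof -
  have "comp_op (\<lambda>z. a * z) ^^ n = (\<lambda>f z. f (a ^ n * z))"
    by (simp add: fun_eq_iff comp_op_funpow funpow_scale)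
  then show ?thesis
    using assms by (simp add: fock_unitary_rotation norm_power)
qed

lemma power_not_convergent_on_unit_circle:
  fixes a :: complex
  assumes "cmod a = 1" "a \<noteq> 1"
  shows "\<not> convergent (\<lambda>n. a ^ n)"
proof
  assume "convergent (\<lambda>n. a ^ n)"
  then obtain L where L: "(\<lambda>n. a ^ n) \<longlonglongrightarrow> L"
    by (auto simp: convergent_def)
  have "(\<lambda>n. a ^ Suc n) \<longlonglongrightarrow> L" "(\<lambda>n. a ^ Suc n) \<longlonglongrightarrow> a * L"
    using LIMSEQ_Suc[OF L] tendsto_mult_left[OF L, of a] by simp_all
  then have "L = 0"
    using assms(2) LIMSEQ_unique by (metis mult_cancel_right2)
  moreover have "(\<lambda>n. cmod (a ^ n)) \<longlonglongrightarrow> cmod L"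
    using L by (rule tendsto_norm)
  then have "cmod L = 1"
    using assms(1) by (simp add: norm_power LIMSEQ_const_iff)
  ultimately show False
    by simp
qed

lemma fock_space_identity:
  assumes "0 < \<nu>"
  shows "(\<lambda>z. z) \<in> fock_space \<nu>"
proof (rule fock_space_gaussian_growth(1)[where \<alpha> = "1 / 4" and M = 1])
  fix z :: complex
  have "cmod z \<le> 1 + 1 / 4 * (cmod z)\<^sup>2"
    using sum_squares_ge_zero[of "cmod z / 2 - 1" 0] by (simp add: power2_eq_square algebra_simps)
  also have "\<dots> \<le> exp (1 / 4 * (cmod z)\<^sup>2)"
    by (rule exp_ge_add_one_self)
  finally show "cmod z \<le> 1 * exp (1 / 4 * (cmod z)\<^sup>2)"
    by simp
qed (use assms in auto)

lemma fock_bounded_functional_eval: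
  assumes "1 \<le> \<nu>"
  shows "fock_bounded_functional \<nu> (\<lambda>f. f w)"
proof -
  obtain C where "\<And>f. f \<in> fock_space \<nu> \<Longrightarrow> cmod (f w) \<le> C * exp ((cmod w)\<^sup>2) * fock_norm \<nu> f"
    using fock_point_evaluation_bound[OF assms] by metis
  then show ?thesis
    unfolding fock_bounded_functional_def by auto
qed

lemma rotation_iterates_not_weakly_convergent:
  assumes "1 \<le> \<nu>" "cmod a = 1" "a \<noteq> 1"
  shows "\<not> (\<exists>T. fock_bounded_operator \<nu> T \<and>
      (\<forall>f\<in>fock_space \<nu>. \<forall>\<Lambda>. fock_bounded_functional \<nu> \<Lambda> \<longrightarrow>
         (\<lambda>n. \<Lambda> ((comp_op (\<lambda>z. a * z) ^^ n) f)) \<longlonglongrightarrow> \<Lambda> (T f)))"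
    (is "\<not> (\<exists>T. _ \<and> ?weak_limit T)")
proof
  assume "\<exists>T. fock_bounded_operator \<nu> T \<and> ?weak_limit T"
  then obtain T where "?weak_limit T"
    by blast
  moreover have "(\<lambda>z. z) \<in> fock_space \<nu>" "fock_bounded_functional \<nu> (\<lambda>f. f 1)"
    using assms(1) by (simp_all add: fock_space_identity fock_bounded_functional_eval)
  ultimately have "(\<lambda>n. ((comp_op (\<lambda>z. a * z) ^^ n) (\<lambda>z. z)) 1) \<longlonglongrightarrow> T (\<lambda>z. z) 1"
    by blast
  then have "convergent (\<lambda>n. a ^ n)"
    by (auto simp: comp_op_funpow funpow_scale convergent_def)
  then show False
    using power_not_convergent_on_unit_circle assms(2,3) by blast
qed

section \<open>Contractive affine maps\<close>

lemma Schwarz_Lemma_ball: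
  assumes hol: "h holomorphic_on ball 0 R" and "h 0 = 0"
    and bound: "\<And>s. cmod s < R \<Longrightarrow> cmod (h s) \<le> M" and "cmod t < R"
  shows "cmod (h t) \<le> M * (cmod t / R)"
proof -
  have "R > 0"
    using \<open>cmod t < R\<close> norm_ge_zero[of t] by linarith
  then have "M \<ge> 0"
    using bound[of 0] \<open>h 0 = 0\<close> by simp
  have approx: "cmod (h t) \<le> (M + \<delta>) * (cmod t / R)" if "\<delta> > 0" for \<delta>
  proof -
    define k where "k = (\<lambda>s. h (of_real R * s) / of_real (M + \<delta>))"
    have "(\<lambda>s. h (of_real R * s)) holomorphic_on ball 0 1"
      using \<open>R > 0\<close>
      by (intro holomorphic_on_compose_gen[OF _ hol, unfolded o_def] holomorphic_intros)
         (auto simp: norm_mult)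
    then have "k holomorphic_on ball 0 1"
      unfolding k_def using \<open>M \<ge> 0\<close> \<open>\<delta> > 0\<close> by (intro holomorphic_intros) auto
    moreover have "cmod (k s) < 1" if "cmod s < 1" for s
    proof -
      have "cmod (h (of_real R * s)) \<le> M"
        using that \<open>R > 0\<close> by (intro bound) (simp add: norm_mult)
      then show ?thesis
        using \<open>M \<ge> 0\<close> \<open>\<delta> > 0\<close> by (simp add: k_def norm_divide del: of_real_add)
    qed
    moreover have "cmod (t / of_real R) < 1"
      using \<open>cmod t < R\<close> \<open>R > 0\<close> by (simp add: norm_divide)
    ultimately have "cmod (k (t / of_real R)) \<le> cmod (t / of_real R)"
      using \<open>h 0 = 0\<close> by (intro Schwarz_Lemma(1)) (auto simp: k_def)
    then show ?thesis
      using \<open>R > 0\<close> \<open>M \<ge> 0\<close> \<open>\<delta> > 0\<close> by (simp add: k_def norm_divide field_simps del: of_real_add)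
  qed
  have "((\<lambda>\<delta>. (M + \<delta>) * (cmod t / R)) \<longlongrightarrow> (M + 0) * (cmod t / R)) (at_right 0)"
    by (intro tendsto_intros)
  moreover have "eventually (\<lambda>\<delta>. cmod (h t) \<le> (M + \<delta>) * (cmod t / R)) (at_right 0)"
    using approx by (intro eventually_at_rightI[of 0 1]) auto
  ultimately show ?thesis
    by (auto intro: tendsto_lowerbound)
qed

lemma dilation_radius_sq_le:
  fixes c z :: complex
  shows "(cmod c + cmod (z - c) / 3)\<^sup>2 \<le> 32 / 9 * (cmod c)\<^sup>2 + 2 / 9 * (cmod z)\<^sup>2"
proof -
  have "cmod (z - c) \<le> cmod z + cmod c"
    by (rule norm_triangle_ineq4)
  then have "(cmod c + cmod (z - c) / 3)\<^sup>2 \<le> ((4 * cmod c + cmod z) / 3)\<^sup>2"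
    by (intro power_mono) auto
  also have "\<dots> \<le> 32 / 9 * (cmod c)\<^sup>2 + 2 / 9 * (cmod z)\<^sup>2"
    using sum_squares_ge_zero[of "4 * cmod c - cmod z" 0] by (simp add: power2_eq_square algebra_simps)
  finally show ?thesis .
qed

text \<open>The radius \<open>1/3\<close> makes the resulting growth exponent \<open>2/9\<close> smaller than the \<open>1/2\<close> of
  the Fock weight.\<close>

lemma entire_dilation_difference_le:
  assumes hol: "f holomorphic_on UNIV" and growth: "\<And>w. cmod (f w) \<le> B * exp ((cmod w)\<^sup>2)"
    and "cmod t < 1 / 3"
  shows "cmod (f (c + t * (z - c)) - f c)
    \<le> 6 * B * exp (32 / 9 * (cmod c)\<^sup>2) * cmod t * exp (2 / 9 * (cmod z)\<^sup>2)"
proof -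
  define \<rho> where "\<rho> = cmod c + cmod (z - c) / 3"
  have "B \<ge> 0"
    using growth[of 0] norm_ge_zero[of "f 0"] by (simp del: norm_ge_zero)
  have near: "cmod (f w) \<le> B * exp (\<rho>\<^sup>2)" if "cmod w \<le> \<rho>" for w
  proof -
    have "exp ((cmod w)\<^sup>2) \<le> exp (\<rho>\<^sup>2)"
      using that by (simp add: power_mono)
    then show ?thesis
      using growth[of w] \<open>B \<ge> 0\<close> by (meson mult_left_mono order_trans)
  qed
  have "cmod (f (c + s * (z - c)) - f c) \<le> 2 * B * exp (\<rho>\<^sup>2)" if "cmod s < 1 / 3" for s
  proof -
    have "cmod (c + s * (z - c)) \<le> cmod c + cmod s * cmod (z - c)"
      by (metis norm_mult norm_triangle_ineq)
    also have "\<dots> \<le> \<rho>"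
      using that mult_right_mono[of "cmod s" "1 / 3" "cmod (z - c)"] by (simp add: \<rho>_def)
    finally show ?thesis
      using near[of "c + s * (z - c)"] near[of c] norm_triangle_ineq4[of "f (c + s * (z - c))" "f c"]
      by (simp add: \<rho>_def)
  qed
  moreover have "(\<lambda>s. f (c + s * (z - c)) - f c) holomorphic_on ball 0 (1 / 3)"
    using hol by (intro holomorphic_intros holomorphic_on_compose_gen[OF _ hol, unfolded o_def]) auto
  ultimately have "cmod (f (c + t * (z - c)) - f c) \<le> 2 * B * exp (\<rho>\<^sup>2) * (cmod t / (1 / 3))"
    using \<open>cmod t < 1 / 3\<close> by (intro Schwarz_Lemma_ball[where h = "\<lambda>s. f (c + s * (z - c)) - f c"]) auto
  also have "\<dots> \<le> 6 * B * cmod t * exp (32 / 9 * (cmod c)\<^sup>2 + 2 / 9 * (cmod z)\<^sup>2)"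
  proof -
    have "exp (\<rho>\<^sup>2) \<le> exp (32 / 9 * (cmod c)\<^sup>2 + 2 / 9 * (cmod z)\<^sup>2)"
      using dilation_radius_sq_le by (simp add: \<rho>_def)
    then show ?thesis
      using \<open>B \<ge> 0\<close> by (simp add: mult_left_mono mult_ac)
  qed
  finally show ?thesis
    by (simp add: exp_add mult_ac)
qed

lemma fock_dilation_difference_bound:
  assumes "1 \<le> \<nu>"
  obtains K where "K \<ge> 0"
    "\<And>f t. f \<in> fock_space \<nu> \<Longrightarrow> cmod t < 1 / 3 \<Longrightarrow>
      (\<lambda>z. f (c + t * (z - c)) - f c) \<in> fock_space \<nu> \<and>
      fock_norm \<nu> (\<lambda>z. f (c + t * (z - c)) - f c) \<le> K * cmod t * fock_norm \<nu> f"
proof -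
  obtain C where "C > 0"
    and C: "\<And>f w. f \<in> fock_space \<nu> \<Longrightarrow> cmod (f w) \<le> C * exp ((cmod w)\<^sup>2) * fock_norm \<nu> f"
    using fock_point_evaluation_bound[OF assms] by blast
  let ?G = "\<lambda>z. complex_of_real (exp (2 / 9 * (cmod z)\<^sup>2))"
  show ?thesis
  proof (intro that conjI)
    show "6 * C * exp (32 / 9 * (cmod c)\<^sup>2) * fock_norm \<nu> ?G \<ge> 0"
      using \<open>C > 0\<close> by simp
  next
    fix f t
    assume f: "f \<in> fock_space \<nu>" and t: "cmod t < 1 / 3"
    let ?g = "\<lambda>z. f (c + t * (z - c)) - f c"
    let ?M = "6 * (C * fock_norm \<nu> f) * exp (32 / 9 * (cmod c)\<^sup>2) * cmod t"
    have hol: "f holomorphic_on UNIV"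
      using f by (simp add: fock_space_def)
    then have hol_g: "?g holomorphic_on UNIV"
      by (intro holomorphic_intros holomorphic_on_compose_gen[OF _ hol, unfolded o_def]) auto
    have "cmod (f w) \<le> (C * fock_norm \<nu> f) * exp ((cmod w)\<^sup>2)" for w
      using C[OF f] by (simp add: mult_ac)
    then have bound: "cmod (?g z) \<le> ?M * exp (2 / 9 * (cmod z)\<^sup>2)" for z
      by (rule entire_dilation_difference_le[OF hol _ t])
    have "?M \<ge> 0"
      using \<open>C > 0\<close> by simp
    from fock_space_gaussian_growth[OF _ _ hol_g this bound] assms
    show "?g \<in> fock_space \<nu>"
      and "fock_norm \<nu> ?g \<le> 6 * C * exp (32 / 9 * (cmod c)\<^sup>2) * fock_norm \<nu> ?G * cmod t * fock_norm \<nu> f"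
      by (auto simp: mult_ac)
  qed
qed

lemma fock_op_dist_nonneg: "0 \<le> fock_op_dist \<nu> T S"
proof -
  have "(\<lambda>z. 0) \<in> fock_space \<nu>" "fock_norm \<nu> (\<lambda>z. 0) \<le> 1"
    by (simp_all add: fock_space_def fock_integral_def fock_norm_def)
  then show ?thesis
    unfolding fock_op_dist_def by (intro SUP_upper2[of "\<lambda>z. 0"]) (auto simp: Let_def)
qed

lemma fock_op_dist_le:
  assumes "\<And>f. f \<in> fock_space \<nu> \<Longrightarrow> fock_norm \<nu> f \<le> 1 \<Longrightarrow>
    (\<lambda>z. T f z - S f z) \<in> fock_space \<nu> \<and> fock_norm \<nu> (\<lambda>z. T f z - S f z) \<le> B"
  shows "fock_op_dist \<nu> T S \<le> ereal B"
  unfolding fock_op_dist_def using assms by (intro SUP_least) (auto simp: Let_def)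

lemma fock_op_dist_dilation_le:
  assumes "1 \<le> \<nu>"
  obtains K where
    "\<And>t. cmod t < 1 / 3 \<Longrightarrow> fock_op_dist \<nu> (\<lambda>f z. f (c + t * (z - c))) (\<lambda>f z. f c) \<le> ereal (K * cmod t)"
proof -
  obtain K where "K \<ge> 0" and K: "\<And>f t. f \<in> fock_space \<nu> \<Longrightarrow> cmod t < 1 / 3 \<Longrightarrow>
      (\<lambda>z. f (c + t * (z - c)) - f c) \<in> fock_space \<nu> \<and>
      fock_norm \<nu> (\<lambda>z. f (c + t * (z - c)) - f c) \<le> K * cmod t * fock_norm \<nu> f"
    using fock_dilation_difference_bound[OF assms] by blast
  show ?thesis
  proof (intro that fock_op_dist_le)
    fix f and t :: complex
    assume "cmod t < 1 / 3" "f \<in> fock_space \<nu>" "fock_norm \<nu> f \<le> 1"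
    moreover have "K * cmod t * fock_norm \<nu> f \<le> K * cmod t"
      using \<open>fock_norm \<nu> f \<le> 1\<close> \<open>K \<ge> 0\<close> by (simp add: mult_left_le)
    ultimately show "(\<lambda>z. f (c + t * (z - c)) - f c) \<in> fock_space \<nu> \<and>
        fock_norm \<nu> (\<lambda>z. f (c + t * (z - c)) - f c) \<le> K * cmod t"
      using K by fastforce
  qed
qed

lemma affine_iterates_tendsto_fixed_point_eval:
  assumes "1 \<le> \<nu>" "cmod a < 1"
  shows "(\<lambda>n. fock_op_dist \<nu> (comp_op (\<lambda>z. a * z + b) ^^ n) (\<lambda>f. (\<lambda>z. f (b / (1 - a))))) \<longlonglongrightarrow> 0"
proof -
  define c where "c = b / (1 - a)"
  obtain K where K: "\<And>t. cmod t < 1 / 3 \<Longrightarrow>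
      fock_op_dist \<nu> (\<lambda>f z. f (c + t * (z - c))) (\<lambda>f z. f c) \<le> ereal (K * cmod t)"
    using fock_op_dist_dilation_le[OF assms(1)] by blast
  have "a \<noteq> 1"
    using assms(2) by auto
  then have iterate: "comp_op (\<lambda>z. a * z + b) ^^ n = (\<lambda>f z. f (c + a ^ n * (z - c)))" for n
    by (simp add: fun_eq_iff comp_op_funpow funpow_affine c_def)
  have "(\<lambda>n. cmod (a ^ n)) \<longlonglongrightarrow> 0"
    using assms(2) by (simp add: norm_power LIMSEQ_power_zero)
  then have "eventually (\<lambda>n. cmod (a ^ n) < 1 / 3) sequentially"
    by (rule order_tendstoD) simp
  then have upper: "eventually (\<lambda>n. fock_op_dist \<nu> (comp_op (\<lambda>z. a * z + b) ^^ n) (\<lambda>f z. f c)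
      \<le> ereal (K * cmod (a ^ n))) sequentially"
    by (rule eventually_mono) (simp add: iterate K)
  have lower: "eventually (\<lambda>n. 0 \<le> fock_op_dist \<nu> (comp_op (\<lambda>z. a * z + b) ^^ n) (\<lambda>f z. f c))
      sequentially"
    by (simp add: fock_op_dist_nonneg)
  have "(\<lambda>n. ereal (K * cmod (a ^ n))) \<longlonglongrightarrow> 0"
    using \<open>(\<lambda>n. cmod (a ^ n)) \<longlonglongrightarrow> 0\<close> by (simp add: zero_ereal_def tendsto_mult_right_zero)
  from tendsto_sandwich[OF lower upper tendsto_const this] show ?thesis
    by (simp add: c_def)
qed

theorem theorem2p2:
  fixes \<nu> :: real
  assumes "1 \<le> \<nu>"
  shows
    "(\<forall>a::complex. cmod a = 1 \<longrightarrow> a \<noteq> 1 \<longrightarrow>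
        (\<forall>n\<ge>1. fock_unitary \<nu> (comp_op (\<lambda>z. a * z) ^^ n)) \<and>
        \<not> (\<exists>T. fock_bounded_operator \<nu> T \<and>
              (\<forall>f\<in>fock_space \<nu>. \<forall>\<Lambda>. fock_bounded_functional \<nu> \<Lambda> \<longrightarrow>
                 (\<lambda>n. \<Lambda> ((comp_op (\<lambda>z. a * z) ^^ n) f)) \<longlonglongrightarrow> \<Lambda> (T f))))
   \<and>
    (\<forall>a b::complex. cmod a < 1 \<longrightarrow>
        (\<lambda>n. fock_op_dist \<nu> (comp_op (\<lambda>z. a * z + b) ^^ n) (\<lambda>f. (\<lambda>z. f (b / (1 - a)))))
          \<longlonglongrightarrow> 0)"
proof (intro conjI allI impI)
  fix a :: complex and n :: nat
  assume "cmod a = 1"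
  then show "fock_unitary \<nu> (comp_op (\<lambda>z. a * z) ^^ n)"
    by (rule fock_unitary_rotation_iterates)
next
  fix a :: complex
  assume "cmod a = 1" "a \<noteq> 1"
  with assms show "\<not> (\<exists>T. fock_bounded_operator \<nu> T \<and>
      (\<forall>f\<in>fock_space \<nu>. \<forall>\<Lambda>. fock_bounded_functional \<nu> \<Lambda> \<longrightarrow>
         (\<lambda>n. \<Lambda> ((comp_op (\<lambda>z. a * z) ^^ n) f)) \<longlonglongrightarrow> \<Lambda> (T f)))"
    by (rule rotation_iterates_not_weakly_convergent)
next
  fix a b :: complex
  assume "cmod a < 1"
  with assms show "(\<lambda>n. fock_op_dist \<nu> (comp_op (\<lambda>z. a * z + b) ^^ n) (\<lambda>f z. f (b / (1 - a)))) \<longlonglongrightarrow> 0"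
    by (rule affine_iterates_tendsto_fixed_point_eval)
qed

end
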